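(* The function $h(s) = s\,\dfrac{\theta_o'(s)}{\theta_o(s)}$, $s>0$, is strictly decreasing on $[1/4,\infty)$, and satisfies $h(s) \ge \dfrac{\theta_o'(1)}{\theta_o(1)}$ for all $0 < s \le 1/4$.
   Context: For $s>0$, $\theta_o(s) = \sum_{k\in\mathbb{Z}} e^{-\pi (2k+1)^2 s}$. *)

theory Defs
  imports "HOL-Analysis.Analysis"
begin

definition theta_o :: "real \<Rightarrow> real" where
  "theta_o s = (\<Sum>\<^sub>\<infinity>k\<in>(UNIV::int set). exp (- pi * (2 * of_int k + 1)^2 * s))"

definition h_fun :: "real \<Rightarrow> real" where
  "h_fun s = s * deriv theta_o s / theta_o s"

end

theory Submission
  imports Defs
begin

text \<open>
  Write \<open>\<theta>\<^sub>o = 2 S\<close> with \<open>S(s) = \<Sum>\<^sub>n exp(-\<lambda>\<^sub>n s)\<close> and \<open>\<lambda>\<^sub>n = \<pi>(2n+1)\<^sup>2\<close>, so that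
  \<open>h(s) = -s M(s)/S(s)\<close> with \<open>M(s) = \<Sum>\<^sub>n \<lambda>\<^sub>n exp(-\<lambda>\<^sub>n s)\<close>. Lowering all exponents
  by \<open>\<pi>\<close> turns this into \<open>h(s) = -\<pi> s - s M'(s)/S'(s)\<close>, where now the first exponent is \<open>0\<close>:
  hence \<open>S' \<ge> 1\<close> is decreasing, and \<open>s M'(s)\<close> decreases at rate at most \<open>M'(1/8) < \<pi>\<close> on
  \<open>[1/4, \<infinity>)\<close>, because each \<open>s \<mapsto> \<mu> s exp(-\<mu> s)\<close> does so at rate \<open>\<mu> exp(-\<mu>/8)\<close>.
  So \<open>h\<close> decreases strictly there.

  For \<open>s \<le> 1/4\<close> the claim \<open>h(s) \<ge> -\<pi>\<close> reads \<open>\<Sum>\<^sub>n (x\<^sub>n\<^sup>2 - 1) exp(-\<pi> x\<^sub>n\<^sup>2) \<le> 0\<close> with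
  \<open>x\<^sub>n = (2n+1)\<surd>s\<close>: roughly \<open>1/(4\<surd>s)\<close> terms with \<open>x\<^sub>n \<le> 1/2\<close> are each below
  \<open>-3/4 exp(-\<pi>/4)\<close> and outweigh the positive terms, which start at \<open>x\<^sub>n \<ge> 1\<close> with size at most
  \<open>exp(-\<pi>)\<close> and decay geometrically. Finally \<open>h(1) \<le> -\<pi>\<close> because every \<open>\<lambda>\<^sub>n \<ge> \<pi>\<close>.
\<close>

lemma le_exp_half:
  fixes y :: real
  assumes "0 \<le> y"
  shows "y \<le> exp (y/2)"
proof -
  have "y \<le> 1 + y/2 + (y/2)^2/2"
    using zero_le_power2[of "y - 2"] by (simp add: power2_eq_square algebra_simps)
  also have "\<dots> \<le> exp (y/2)"
    using exp_lower_Taylor_quadratic[of "y/2"] assms by simp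
  finally show ?thesis .
qed

lemma mult_exp_neg_le_exp_neg_half:
  fixes y :: real
  assumes "0 \<le> y"
  shows "y * exp (-y) \<le> exp (-y/2)"
proof -
  have "y * exp (-y) \<le> exp (y/2) * exp (-y)"
    using le_exp_half[OF assms] by simp
  also have "\<dots> = exp (-y/2)"
    by (simp flip: exp_add)
  finally show ?thesis .
qed

lemma inverse_one_minus_exp_neg_le:
  fixes u :: real
  assumes "0 < u"
  shows "1 / (1 - exp (-u)) \<le> 1 + 1/u"
proof -
  have "exp (-u) \<le> 1 / (1 + u)"
    using exp_ge_add_one_self[of u] assms by (simp add: exp_minus field_simps)
  then have "u / (1 + u) \<le> 1 - exp (-u)"
    using assms by (simp add: field_simps)
  then have "1 / (1 - exp (-u)) \<le> 1 / (u / (1 + u))"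
    using assms by (intro divide_left_mono) auto
  also have "\<dots> = 1 + 1/u"
    using assms by (simp add: field_simps)
  finally show ?thesis .
qed

text \<open>The derivative of \<open>x \<mapsto> x exp(-bx)\<close> is at least \<open>-exp(-b/8)\<close> on \<open>[1/4, \<infinity>)\<close>,
  since \<open>bx exp(-bx) \<le> exp(-bx/2) \<le> exp(-b/8)\<close> there.\<close>
lemma mult_exp_neg_diff_le:
  fixes b s t :: real
  assumes "1/4 \<le> s" "s \<le> t" "0 \<le> b"
  shows "s * exp (- b * s) - t * exp (- b * t) \<le> exp (- b/8) * (t - s)"
proof -
  define \<psi> where "\<psi> x = x * exp (- b * x) + exp (- b/8) * x" for x
  have "\<psi> s \<le> \<psi> t"
  proof (rule DERIV_nonneg_imp_increasing_open[of s t \<psi>])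
    fix x assume x: "s < x" "x < t"
    have "(b * x) * exp (- (b * x)) \<le> exp (- (b * x)/2)"
      using assms x by (intro mult_exp_neg_le_exp_neg_half) auto
    also have "\<dots> \<le> exp (- b/8)"
      using assms x mult_left_mono[of "1/4" x b] by simp
    moreover have "x * (exp (- b * x) * (- b)) = - ((b * x) * exp (- (b * x)))"
      by simp
    ultimately have "0 \<le> exp (- b * x) + x * (exp (- b * x) * (- b)) + exp (- b/8)"
      using exp_gt_zero[of "- b * x"] by linarith
    moreover have "(\<psi> has_real_derivative
        exp (- b * x) + x * (exp (- b * x) * (- b)) + exp (- b/8)) (at x)"
      unfolding \<psi>_def by (auto intro!: derivative_eq_intros)
    ultimately show "\<exists>y. (\<psi> has_real_derivative y) (at x) \<and> 0 \<le> y"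
      by blast
  qed (use assms in \<open>auto simp: \<psi>_def intro!: continuous_intros\<close>)
  then show ?thesis
    by (simp add: \<psi>_def algebra_simps)
qed

section \<open>Exponential series with linearly growing exponents\<close>

definition exp_series :: "(nat \<Rightarrow> real) \<Rightarrow> real \<Rightarrow> real" where
  "exp_series \<mu> x = (\<Sum>n. exp (- \<mu> n * x))"

definition exp_moment :: "(nat \<Rightarrow> real) \<Rightarrow> real \<Rightarrow> real" where
  "exp_moment \<mu> x = (\<Sum>n. \<mu> n * exp (- \<mu> n * x))"

locale exp_growth =
  fixes \<mu> :: "nat \<Rightarrow> real"
  assumes index_le: "real n \<le> \<mu> n"
begin

lemma nonneg: "0 \<le> \<mu> n"
  using index_le[of n] by linarith

lemma moment_term_le_geometric:
  assumes "0 < a" "a \<le> x"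
  shows "\<mu> n * exp (- \<mu> n * x) \<le> (1/a) * exp (- a/2) ^ n"
proof -
  have "\<mu> n * exp (- \<mu> n * x) \<le> \<mu> n * exp (- \<mu> n * a)"
    using assms nonneg[of n] by (intro mult_left_mono) (auto intro: mult_left_mono)
  also have "\<dots> = (1/a) * ((a * \<mu> n) * exp (- (a * \<mu> n)))"
    using assms by (simp add: algebra_simps)
  also have "\<dots> \<le> (1/a) * exp (- (a * \<mu> n)/2)"
    using assms nonneg[of n] by (intro mult_left_mono mult_exp_neg_le_exp_neg_half) auto
  also have "\<dots> \<le> (1/a) * exp (- (a * real n)/2)"
    using assms index_le[of n] by (intro mult_left_mono) auto
  also have "exp (- (a * real n)/2) = exp (- a/2) ^ n"
    by (subst exp_of_nat_mult[symmetric]) (simp add: algebra_simps)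
  finally show ?thesis .
qed

lemma summable_moment:
  assumes "0 < x"
  shows "summable (\<lambda>n. \<mu> n * exp (- \<mu> n * x))"
proof (rule summable_comparison_test'[where N = 0])
  show "summable (\<lambda>n. (1/x) * exp (- x/2) ^ n)"
    using assms by (intro summable_mult summable_geometric) auto
  show "norm (\<mu> n * exp (- \<mu> n * x)) \<le> (1/x) * exp (- x/2) ^ n" for n
    using moment_term_le_geometric[of x x n] nonneg[of n] assms by simp
qed

lemma summable_series:
  assumes "0 < x"
  shows "summable (\<lambda>n. exp (- \<mu> n * x))"
proof (rule summable_comparison_test'[where N = 0])
  show "summable (\<lambda>n. exp (- x) ^ n)"
    using assms by (intro summable_geometric) auto
  show "norm (exp (- \<mu> n * x)) \<le> exp (- x) ^ n" for n
    using assms index_le[of n] by (simp flip: exp_of_nat_mult)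
qed

lemma exp_series_pos: "0 < x \<Longrightarrow> 0 < exp_series \<mu> x"
  unfolding exp_series_def by (intro suminf_pos summable_series) auto

lemma exp_moment_nonneg: "0 < x \<Longrightarrow> 0 \<le> exp_moment \<mu> x"
  unfolding exp_moment_def by (intro suminf_nonneg summable_moment) (auto simp: nonneg)

lemma exp_series_antimono:
  assumes "0 < s" "s \<le> t"
  shows "exp_series \<mu> t \<le> exp_series \<mu> s"
  unfolding exp_series_def using assms nonneg
  by (intro suminf_le summable_series) (auto intro: mult_left_mono)

lemma exp_series_ge_1:
  assumes "0 < x" "\<mu> 0 = 0"
  shows "1 \<le> exp_series \<mu> x"
proof -
  have "(\<Sum>n<1. exp (- \<mu> n * x)) \<le> exp_series \<mu> x"
    unfolding exp_series_def using assms by (intro sum_le_suminf summable_series) auto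
  then show ?thesis
    using assms by simp
qed

lemma exp_moment_ge_exp_series:
  assumes "0 < x" "\<And>n. c \<le> \<mu> n"
  shows "c * exp_series \<mu> x \<le> exp_moment \<mu> x"
  unfolding exp_series_def exp_moment_def
  using assms summable_series[OF assms(1)] summable_moment[OF assms(1)]
  by (subst suminf_mult[symmetric]) (auto intro!: suminf_le mult_right_mono)

lemma has_field_derivative_exp_series:
  assumes "0 < x"
  shows "(exp_series \<mu> has_field_derivative - exp_moment \<mu> x) (at x)"
proof -
  define S where "S = {x/2<..}"
  have S: "convex S" "open S" "x \<in> S"
    using assms by (auto simp: S_def)
  have "uniformly_convergent_on S (\<lambda>n y. \<Sum>i<n. - \<mu> i * exp (- \<mu> i * y))"
  proof (rule Weierstrass_m_test')
    show "summable (\<lambda>n. (2/x) * exp (- (x/2)/2) ^ n)"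
      using assms by (intro summable_mult summable_geometric) auto
    show "norm (- \<mu> n * exp (- \<mu> n * y)) \<le> (2/x) * exp (- (x/2)/2) ^ n" if "y \<in> S" for n y
      using moment_term_le_geometric[of "x/2" y n] nonneg[of n] that assms by (simp add: S_def)
  qed
  then have "((\<lambda>y. \<Sum>n. exp (- \<mu> n * y)) has_field_derivative (\<Sum>n. - \<mu> n * exp (- \<mu> n * x))) (at x)"
    using S interior_open[OF S(2)] summable_series[OF assms]
    by (intro has_field_derivative_series'(2)[of S]) (auto intro!: derivative_eq_intros)
  moreover have "(\<Sum>n. - \<mu> n * exp (- \<mu> n * x)) = - exp_moment \<mu> x"
    unfolding exp_moment_def using suminf_minus[OF summable_moment[OF assms]] by simp
  ultimately show ?thesis
    by (simp add: exp_series_def[abs_def])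
qed

lemma exp_series_shift:
  assumes "0 < x"
  shows "exp_series (\<lambda>n. \<mu> n - c) x = exp (c * x) * exp_series \<mu> x"
proof -
  have "exp (- (\<mu> n - c) * x) = exp (c * x) * exp (- \<mu> n * x)" for n
    by (simp add: algebra_simps flip: exp_add)
  then show ?thesis
    unfolding exp_series_def using suminf_mult[OF summable_series[OF assms]] by simp
qed

lemma exp_moment_shift:
  assumes "0 < x"
  shows "exp_moment (\<lambda>n. \<mu> n - c) x = exp (c * x) * (exp_moment \<mu> x - c * exp_series \<mu> x)"
proof -
  have "(\<mu> n - c) * exp (- (\<mu> n - c) * x)
      = exp (c * x) * (\<mu> n * exp (- \<mu> n * x) - c * exp (- \<mu> n * x))" for n
    by (simp add: algebra_simps flip: exp_add)
  then have "exp_moment (\<lambda>n. \<mu> n - c) x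
      = (\<Sum>n. exp (c * x) * (\<mu> n * exp (- \<mu> n * x) - c * exp (- \<mu> n * x)))"
    unfolding exp_moment_def by simp
  also have "\<dots> = exp (c * x) * (\<Sum>n. \<mu> n * exp (- \<mu> n * x) - c * exp (- \<mu> n * x))"
    using assms by (intro suminf_mult summable_diff summable_mult summable_moment summable_series)
  also have "(\<Sum>n. \<mu> n * exp (- \<mu> n * x) - c * exp (- \<mu> n * x))
      = exp_moment \<mu> x - c * exp_series \<mu> x"
    unfolding exp_moment_def exp_series_def
    using suminf_diff[OF summable_moment[OF assms] summable_mult[OF summable_series[OF assms], of c]]
      suminf_mult[OF summable_series[OF assms], of c]
    by simp
  finally show ?thesis .
qed

lemma exp_moment_ratio_shift:
  assumes "0 < x"
  shows "exp_moment (\<lambda>n. \<mu> n - c) x / exp_series (\<lambda>n. \<mu> n - c) x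
       = exp_moment \<mu> x / exp_series \<mu> x - c"
  using exp_series_pos[OF assms]
  by (simp add: exp_series_shift exp_moment_shift assms field_simps)

lemma mult_exp_moment_diff_le:
  assumes "1/4 \<le> s" "s \<le> t"
  shows "s * exp_moment \<mu> s - t * exp_moment \<mu> t \<le> exp_moment \<mu> (1/8) * (t - s)"
proof -
  have pos: "0 < s" "0 < t"
    using assms by auto
  have "s * exp_moment \<mu> s - t * exp_moment \<mu> t
      = (\<Sum>n. \<mu> n * (s * exp (- \<mu> n * s) - t * exp (- \<mu> n * t)))"
    unfolding exp_moment_def using summable_moment[OF pos(1)] summable_moment[OF pos(2)]
    by (simp add: suminf_mult suminf_diff summable_mult algebra_simps flip: suminf_mult)
  also have "\<dots> \<le> (\<Sum>n. \<mu> n * exp (- \<mu> n * (1/8)) * (t - s))"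
  proof (rule suminf_le)
    show "\<mu> n * (s * exp (- \<mu> n * s) - t * exp (- \<mu> n * t))
        \<le> \<mu> n * exp (- \<mu> n * (1/8)) * (t - s)" for n
      using mult_exp_neg_diff_le[OF assms nonneg[of n]] nonneg[of n]
      by (auto simp: mult.assoc intro: mult_left_mono)
    show "summable (\<lambda>n. \<mu> n * (s * exp (- \<mu> n * s) - t * exp (- \<mu> n * t)))"
      using summable_diff[OF summable_mult[OF summable_moment[OF pos(1)]]
                             summable_mult[OF summable_moment[OF pos(2)]]]
      by (simp add: algebra_simps)
    show "summable (\<lambda>n. \<mu> n * exp (- \<mu> n * (1/8)) * (t - s))"
      by (intro summable_mult2 summable_moment) simp
  qed
  also have "\<dots> = exp_moment \<mu> (1/8) * (t - s)"
    unfolding exp_moment_def by (intro suminf_mult2[symmetric] summable_moment) simp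
  finally show ?thesis .
qed

lemma mult_exp_moment_ratio_diff_le:
  assumes "\<mu> 0 = 0" "1/4 \<le> s" "s \<le> t"
  shows "s * exp_moment \<mu> s / exp_series \<mu> s - t * exp_moment \<mu> t / exp_series \<mu> t
       \<le> exp_moment \<mu> (1/8) * (t - s)"
proof -
  have pos: "0 < s" "0 < t"
    using assms by auto
  have St: "1 \<le> exp_series \<mu> t"
    using exp_series_ge_1[OF pos(2) assms(1)] .
  have "s * exp_moment \<mu> s / exp_series \<mu> s \<le> s * exp_moment \<mu> s / exp_series \<mu> t"
    using exp_moment_nonneg[OF pos(1)] pos St exp_series_antimono[OF pos(1) assms(3)]
    by (intro divide_left_mono) auto
  moreover have "d / exp_series \<mu> t \<le> max 0 d" for d
  proof (cases "0 \<le> d")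
    case True
    then have "d / exp_series \<mu> t \<le> d / 1"
      using St by (intro divide_left_mono) auto
    then show ?thesis by simp
  qed (use St in \<open>simp add: divide_nonpos_pos\<close>)
  moreover have "max 0 (s * exp_moment \<mu> s - t * exp_moment \<mu> t) \<le> exp_moment \<mu> (1/8) * (t - s)"
    using exp_moment_nonneg[of "1/8"] mult_exp_moment_diff_le[OF assms(2,3)] assms by simp
  ultimately show ?thesis
    by (smt (verit) diff_divide_distrib)
qed

end

section \<open>The odd theta function\<close>

definition theta_exponent :: "nat \<Rightarrow> real" where
  "theta_exponent n = pi * (2 * real n + 1)^2"

lemma theta_exponent_ge_pi: "pi \<le> theta_exponent n"
  unfolding theta_exponent_def by (simp add: power2_eq_square algebra_simps)

lemma theta_exponent_minus_pi: "theta_exponent n - pi = 4 * pi * real n * (real n + 1)"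
  by (simp add: theta_exponent_def power2_eq_square algebra_simps)

lemma theta_exponent_minus_pi_ge: "8 * pi * real n \<le> theta_exponent n - pi"
proof -
  have "2 * real n \<le> real n * (real n + 1)"
    by (cases n) (auto simp: algebra_simps)
  then show ?thesis
    unfolding theta_exponent_minus_pi by (simp add: algebra_simps)
qed

interpretation theta_shifted: exp_growth "\<lambda>n. theta_exponent n - pi"
proof
  show "real n \<le> theta_exponent n - pi" for n
    using theta_exponent_minus_pi_ge[of n] pi_gt3 mult_right_mono[of 1 "8 * pi" "real n"] by simp
qed

interpretation theta: exp_growth theta_exponent
proof
  show "real n \<le> theta_exponent n" for n
    using theta_shifted.index_le[of n] pi_gt_zero by linarith
qed

lemma theta_o_eq:
  assumes "0 < s"
  shows "theta_o s = 2 * exp_series theta_exponent s"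
proof -
  define f where "f k = exp (- pi * (2 * of_int k + 1)^2 * s)" for k :: int
  have terms: "f (int n) = exp (- theta_exponent n * s)" "f (- int n - 1) = exp (- theta_exponent n * s)"
    for n
    by (simp_all add: f_def theta_exponent_def power2_eq_square algebra_simps)
  have "((\<lambda>n. exp (- theta_exponent n * s)) has_sum exp_series theta_exponent s) UNIV"
    unfolding exp_series_def using theta.summable_series[OF assms]
    by (intro sums_nonneg_imp_has_sum) auto
  then have nonneg: "(f has_sum exp_series theta_exponent s) (range int)"
    and neg: "(f has_sum exp_series theta_exponent s) (range (\<lambda>n. - int n - 1))"
    by (auto simp: has_sum_reindex inj_on_def o_def terms)
  have "range int \<union> range (\<lambda>n. - int n - 1) = UNIV"
  proof (intro set_eqI iffI)
    fix k :: int
    show "k \<in> range int \<union> range (\<lambda>n. - int n - 1)"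
      using image_eqI[of k int "nat k"] image_eqI[of k "\<lambda>n. - int n - 1" "nat (- k - 1)"]
      by (cases "0 \<le> k") auto
  qed simp
  then have "(f has_sum 2 * exp_series theta_exponent s) UNIV"
    using has_sum_Un_disjoint[OF nonneg neg] by fastforce
  then show ?thesis
    unfolding theta_o_def f_def[abs_def] by (rule infsumI)
qed

lemma deriv_theta_o:
  assumes "0 < s"
  shows "deriv theta_o s = - 2 * exp_moment theta_exponent s"
proof -
  have "((\<lambda>x. 2 * exp_series theta_exponent x) has_field_derivative
      2 * - exp_moment theta_exponent s) (at s)"
    using theta.has_field_derivative_exp_series[OF assms] by (intro derivative_eq_intros) auto
  then have "(theta_o has_field_derivative 2 * - exp_moment theta_exponent s) (at s)"
    by (rule has_field_derivative_transform_within_open[of _ _ _ "{0<..}"])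
       (use assms theta_o_eq in auto)
  then show ?thesis
    by (simp add: DERIV_imp_deriv)
qed

lemma h_fun_eq:
  assumes "0 < s"
  shows "h_fun s = - (s * exp_moment theta_exponent s / exp_series theta_exponent s)"
  using assms by (simp add: h_fun_def deriv_theta_o theta_o_eq)

lemma theta_shifted_moment_term_le:
  "(theta_exponent n - pi) * exp (- (theta_exponent n - pi) * (1/8)) \<le> 8 * exp (- pi/2) ^ n"
proof -
  define y where "y = (theta_exponent n - pi) / 8"
  have "0 \<le> y"
    using theta_shifted.nonneg[of n] by (simp add: y_def)
  have "theta_exponent n - pi = 8 * y"
    by (simp add: y_def)
  then have "(theta_exponent n - pi) * exp (- (theta_exponent n - pi) * (1/8)) = 8 * (y * exp (- y))"
    by simp
  also have "\<dots> \<le> 8 * exp (- y/2)"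
    using mult_exp_neg_le_exp_neg_half[OF \<open>0 \<le> y\<close>] by simp
  also have "\<dots> \<le> 8 * exp (real n * (- pi/2))"
    using theta_exponent_minus_pi_ge[of n] by (simp add: y_def)
  also have "\<dots> = 8 * exp (- pi/2) ^ n"
    by (simp only: exp_of_nat_mult)
  finally show ?thesis .
qed

lemma eight_plus_pi_mult_exp_neg_half_pi_lt_pi: "(8 + pi) * exp (- pi/2) < pi"
proof -
  have pi: "3.14 \<le> pi"
    using pi_approx(1) by simp
  have "8 + pi < pi * (1 + pi/2 + (pi/2)^2/2)"
    using pi mult_mono[OF pi pi] mult_mono[OF mult_mono[OF pi pi] pi]
    by (simp add: power2_eq_square algebra_simps)
  also have "\<dots> \<le> pi * exp (pi/2)"
    using exp_lower_Taylor_quadratic[of "pi/2"] by (intro mult_left_mono) auto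
  finally show ?thesis
    by (simp add: exp_minus field_simps)
qed

lemma theta_shifted_moment_lt_pi: "exp_moment (\<lambda>n. theta_exponent n - pi) (1/8) < pi"
proof -
  define g where "g n = (theta_exponent n - pi) * exp (- (theta_exponent n - pi) * (1/8))" for n
  define \<rho> where "\<rho> = exp (- pi/2)"
  have \<rho>: "0 < \<rho>" "\<rho> < 1"
    by (auto simp: \<rho>_def)
  have "summable g"
    unfolding g_def by (intro theta_shifted.summable_moment) simp
  moreover have "g 0 = 0"
    by (simp add: g_def theta_exponent_def)
  ultimately have "exp_moment (\<lambda>n. theta_exponent n - pi) (1/8) = (\<Sum>n. g (Suc n))"
    unfolding exp_moment_def g_def[symmetric] by (simp add: suminf_split_head)
  also have "\<dots> \<le> (\<Sum>n. (8 * \<rho>) * \<rho> ^ n)"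
  proof (rule suminf_le)
    show "g (Suc n) \<le> (8 * \<rho>) * \<rho> ^ n" for n
      using theta_shifted_moment_term_le[of "Suc n"] by (simp add: g_def \<rho>_def)
    show "summable (\<lambda>n. g (Suc n))"
      using \<open>summable g\<close> by (simp add: summable_Suc_iff)
    show "summable (\<lambda>n. (8 * \<rho>) * \<rho> ^ n)"
      using \<rho> by (intro summable_mult summable_geometric) auto
  qed
  also have "\<dots> = 8 * \<rho> / (1 - \<rho>)"
    using \<rho> by (simp add: suminf_mult suminf_geometric)
  also have "\<dots> < pi"
    using \<rho> eight_plus_pi_mult_exp_neg_half_pi_lt_pi by (simp add: \<rho>_def field_simps)
  finally show ?thesis .
qed

section \<open>Small arguments\<close>

definition gauss_defect :: "real \<Rightarrow> real" where
  "gauss_defect x = (x^2 - 1) * exp (- pi * x^2)"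

lemma gauss_defect_nonpos:
  assumes "\<bar>x\<bar> \<le> 1"
  shows "gauss_defect x \<le> 0"
  using assms abs_square_le_1[of x] by (simp add: gauss_defect_def mult_nonpos_nonneg)

lemma gauss_defect_le_neg:
  assumes "\<bar>x\<bar> \<le> 1/2"
  shows "gauss_defect x \<le> - 3/4 * exp (- pi/4)"
proof -
  have "x^2 \<le> (1/2)^2"
    using power_mono[OF assms, of 2] by simp
  then have "x^2 - 1 \<le> - 3/4" "exp (- pi/4) \<le> exp (- pi * x^2)"
    by (auto simp: power2_eq_square)
  then have "(x^2 - 1) * exp (- pi * x^2) \<le> - 3/4 * exp (- pi * x^2)"
    by (intro mult_right_mono) auto
  also have "\<dots> \<le> - 3/4 * exp (- pi/4)"
    using \<open>exp (- pi/4) \<le> exp (- pi * x^2)\<close> by simp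
  finally show ?thesis
    by (simp add: gauss_defect_def)
qed

text \<open>With \<open>x = 1 + y\<close> one has \<open>x\<^sup>2 - 1 \<le> 1 + \<pi> y\<^sup>2 \<le> exp(\<pi> y\<^sup>2)\<close>, so the factor
  \<open>exp(-\<pi> y\<^sup>2)\<close> of \<open>exp(-\<pi> x\<^sup>2)\<close> absorbs \<open>x\<^sup>2 - 1\<close>.\<close>
lemma gauss_defect_le_exp_decay:
  assumes "1 \<le> x"
  shows "gauss_defect x \<le> exp (- pi) * exp (- 2 * pi * (x - 1))"
proof -
  define y where "y = x - 1"
  have "0 \<le> y"
    using assms by (simp add: y_def)
  have "x = 1 + y"
    by (simp add: y_def)
  have "1 + 3 * y^2 - ((1 + y)^2 - 1) = (y - 1)^2 + y^2"
    by (simp add: power2_eq_square algebra_simps)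
  then have "(1 + y)^2 - 1 \<le> 1 + 3 * y^2"
    using zero_le_power2[of "y - 1"] zero_le_power2[of y] by linarith
  then have "x^2 - 1 \<le> 1 + 3 * y^2"
    using \<open>x = 1 + y\<close> by simp
  also have "\<dots> \<le> 1 + pi * y^2"
    using pi_gt3 by (intro add_left_mono mult_right_mono) auto
  also have "\<dots> \<le> exp (pi * y^2)"
    by (rule exp_ge_add_one_self)
  finally have "(x^2 - 1) * exp (- pi * y^2) \<le> 1"
    by (simp add: exp_minus field_simps)
  moreover have "exp (- pi * x^2) = exp (- pi) * exp (- 2 * pi * y) * exp (- pi * y^2)"
    by (simp add: y_def power2_eq_square algebra_simps flip: exp_add)
  ultimately show ?thesis
    using mult_left_mono[of "(x^2 - 1) * exp (- pi * y^2)" 1 "exp (- pi) * exp (- 2 * pi * y)"]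
    by (simp add: gauss_defect_def y_def mult_ac)
qed

lemma sixteen_exp_neg_pi_le: "16 * exp (- pi) \<le> 3 * exp (- pi/4)"
proof -
  have "(9/4)^2 \<le> (3 * pi/4)^2"
    using pi_gt3 by (intro power_mono) auto
  then have "16/3 \<le> 1 + 3 * pi/4 + (3 * pi/4)^2/2"
    using pi_gt3 by (simp add: power2_eq_square)
  also have "\<dots> \<le> exp (3 * pi/4)"
    by (rule exp_lower_Taylor_quadratic) simp
  finally have "16/3 * exp (- pi) \<le> exp (3 * pi/4) * exp (- pi)"
    by (intro mult_right_mono) auto
  also have "\<dots> = exp (- pi/4)"
    by (simp flip: exp_add)
  finally show ?thesis
    by simp
qed

text \<open>\<open>odd_threshold r\<close> is the least \<open>n\<close> with \<open>(2n+1) r \<ge> 1\<close>, and the \<open>n\<close> below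
  \<open>odd_half_count r\<close> are those with \<open>(2n+1) r \<le> 1/2\<close>.\<close>
definition odd_threshold :: "real \<Rightarrow> nat" where
  "odd_threshold r = nat \<lceil>1/(2*r) - 1/2\<rceil>"

definition odd_half_count :: "real \<Rightarrow> nat" where
  "odd_half_count r = nat \<lfloor>1/(4*r) + 1/2\<rfloor>"

lemma odd_threshold_le_iff:
  assumes "0 < r"
  shows "odd_threshold r \<le> n \<longleftrightarrow> 1 \<le> (2 * real n + 1) * r"
proof -
  have "odd_threshold r \<le> n \<longleftrightarrow> 1/(2*r) - 1/2 \<le> real n"
    unfolding odd_threshold_def by (simp add: nat_le_iff ceiling_le_iff)
  also have "\<dots> \<longleftrightarrow> 1 \<le> (2 * real n + 1) * r"
    using assms by (simp add: field_simps)
  finally show ?thesis .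
qed

lemma odd_mult_le_half:
  assumes "0 < r" "n < odd_half_count r"
  shows "(2 * real n + 1) * r \<le> 1/2"
proof -
  have "int n + 1 \<le> \<lfloor>1/(4*r) + 1/2\<rfloor>"
    using assms(2) unfolding odd_half_count_def by linarith
  then have "real n + 1 \<le> 1/(4*r) + 1/2"
    by (simp add: le_floor_iff)
  then show ?thesis
    using assms(1) by (simp add: field_simps)
qed

lemma exp_neg_pi_geometric_le:
  assumes "0 < r" "r \<le> 1/2"
  shows "exp (- pi) / (1 - exp (- 4 * pi * r)) \<le> real (odd_half_count r) * (3/4 * exp (- pi/4))"
proof -
  define K where "K = real (odd_half_count r)"
  have "1 \<le> 1/(4*r) + 1/2"
    using assms by (simp add: field_simps)
  then have "1 \<le> \<lfloor>1/(4*r) + 1/2\<rfloor>"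
    by (simp add: le_floor_iff)
  then have "1 \<le> K"
    unfolding K_def odd_half_count_def by linarith
  moreover have "1/(4*r) - 1/2 \<le> K"
    unfolding K_def odd_half_count_def by linarith
  ultimately have K: "(1 + 1/(2*r)) / 4 \<le> K"
    by (simp add: field_simps)
  have "1 / (1 - exp (- (4 * pi * r))) \<le> 1 + 1/(4 * pi * r)"
    using assms by (intro inverse_one_minus_exp_neg_le) simp
  then have "exp (- pi) / (1 - exp (- 4 * pi * r)) \<le> exp (- pi) * (1 + 1/(4 * pi * r))"
    using mult_left_mono[of _ _ "exp (- pi)"] by fastforce
  also have "\<dots> \<le> exp (- pi) * (1 + 1/(2*r))"
    using assms pi_ge_two by (intro mult_left_mono add_left_mono divide_left_mono) auto
  also have "\<dots> \<le> 3/16 * exp (- pi/4) * (1 + 1/(2*r))"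
    using sixteen_exp_neg_pi_le assms by (intro mult_right_mono) auto
  also have "\<dots> \<le> 3/4 * exp (- pi/4) * K"
    using K mult_left_mono[OF K, of "3/4 * exp (- pi/4)"] by simp
  finally show ?thesis
    by (simp add: K_def mult.commute)
qed

lemma gauss_defect_odd:
  "gauss_defect ((2 * real n + 1) * r)
     = r^2 / pi * (theta_exponent n * exp (- theta_exponent n * r^2)) - exp (- theta_exponent n * r^2)"
proof -
  define q where "q = (2 * real n + 1)^2"
  have "((2 * real n + 1) * r)^2 = r^2 * q"
    by (simp add: q_def power_mult_distrib)
  moreover have "theta_exponent n = pi * q"
    by (simp add: theta_exponent_def q_def)
  ultimately show ?thesis
    unfolding gauss_defect_def by (simp add: field_simps)
qed

lemma summable_gauss_defect_odd:
  assumes "0 < r"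
  shows "summable (\<lambda>n. gauss_defect ((2 * real n + 1) * r))"
  unfolding gauss_defect_odd using assms
  by (intro summable_diff summable_mult theta.summable_moment theta.summable_series) auto

lemma gauss_defect_odd_le:
  assumes "0 < r"
  shows "gauss_defect ((2 * real n + 1) * r)
    \<le> (if odd_threshold r \<le> n then exp (- pi) * exp (- 4 * pi * r) ^ (n - odd_threshold r) else 0)
      - (if n < odd_half_count r then 3/4 * exp (- pi/4) else 0)"
proof -
  define x where "x m = (2 * real m + 1) * r" for m
  define N where "N = odd_threshold r"
  have x_ge: "N \<le> m \<longleftrightarrow> 1 \<le> x m" for m
    unfolding N_def x_def using odd_threshold_le_iff[OF assms] .
  show ?thesis
  proof (cases "N \<le> n")
    case True
    then have "\<not> n < odd_half_count r"
      using x_ge odd_mult_le_half[OF assms, of n] by (force simp: x_def)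
    have "2 * r * real (n - N) \<le> x n - 1"
      using x_ge[of N] True by (simp add: x_def of_nat_diff algebra_simps)
    then have "real (n - N) * (- 4 * pi * r) \<ge> - 2 * pi * (x n - 1)"
      using mult_left_mono[of _ _ "2 * pi"] by (fastforce simp: algebra_simps)
    then have "exp (- pi) * exp (- 2 * pi * (x n - 1)) \<le> exp (- pi) * exp (real (n - N) * (- 4 * pi * r))"
      by simp
    moreover have "1 \<le> x n"
      using x_ge True by blast
    ultimately have "gauss_defect (x n) \<le> exp (- pi) * exp (real (n - N) * (- 4 * pi * r))"
      using gauss_defect_le_exp_decay[of "x n"] by linarith
    then have "gauss_defect (x n) \<le> exp (- pi) * exp (- 4 * pi * r) ^ (n - N)"
      by (simp only: exp_of_nat_mult)
    then show ?thesis
      using True \<open>\<not> n < odd_half_count r\<close> by (simp add: x_def N_def)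
  next
    case False
    have "0 \<le> x n" "x n < 1"
      using assms False x_ge[of n] by (auto simp: x_def)
    then show ?thesis
      using False odd_mult_le_half[OF assms, of n] gauss_defect_nonpos[of "x n"] gauss_defect_le_neg[of "x n"]
      by (auto simp: x_def N_def)
  qed
qed

lemma suminf_gauss_defect_odd_nonpos:
  assumes "0 < r" "r \<le> 1/2"
  shows "(\<Sum>n. gauss_defect ((2 * real n + 1) * r)) \<le> 0"
proof -
  define N where "N = odd_threshold r"
  define K where "K = odd_half_count r"
  define \<rho> where "\<rho> = exp (- 4 * pi * r)"
  define A where "A = 3/4 * exp (- pi/4)"
  have "0 < \<rho>" "\<rho> < 1"
    using assms by (auto simp: \<rho>_def)
  then have "(\<lambda>i. exp (- pi) * \<rho>^i) sums (exp (- pi) / (1 - \<rho>))"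
    using sums_mult[OF geometric_sums, of \<rho> "exp (- pi)"] by simp
  then have "(\<lambda>i. (\<lambda>n. if N \<le> n then exp (- pi) * \<rho>^(n - N) else 0) (i + N))
      sums (exp (- pi) / (1 - \<rho>))"
    by simp
  then have "(\<lambda>n. if N \<le> n then exp (- pi) * \<rho>^(n - N) else 0) sums (exp (- pi) / (1 - \<rho>))"
    by (subst (asm) sums_iff_shift) simp
  moreover have "(\<lambda>n. if n < K then A else 0) sums (real K * A)"
    using sums_If_finite_set[of "{..<K}" "\<lambda>_. A"] by (simp add: lessThan_def)
  ultimately have majorant_sums:
    "(\<lambda>n. (if N \<le> n then exp (- pi) * \<rho>^(n - N) else 0) - (if n < K then A else 0))
      sums (exp (- pi) / (1 - \<rho>) - real K * A)"
    by (rule sums_diff)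
  have majorant: "gauss_defect ((2 * real n + 1) * r)
      \<le> (if N \<le> n then exp (- pi) * \<rho>^(n - N) else 0) - (if n < K then A else 0)" for n
    unfolding N_def K_def \<rho>_def A_def by (rule gauss_defect_odd_le[OF assms(1)])
  have "(\<Sum>n. gauss_defect ((2 * real n + 1) * r)) \<le> exp (- pi) / (1 - \<rho>) - real K * A"
    by (rule sums_le[OF majorant summable_sums[OF summable_gauss_defect_odd[OF assms(1)]] majorant_sums])
  also have "\<dots> \<le> 0"
    using exp_neg_pi_geometric_le[OF assms] by (simp add: \<rho>_def K_def A_def mult.commute)
  finally show ?thesis .
qed

lemma mult_theta_moment_le:
  assumes "0 < s" "s \<le> 1/4"
  shows "s * exp_moment theta_exponent s \<le> pi * exp_series theta_exponent s"
proof -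
  define r where "r = sqrt s"
  have r: "0 < r" "r \<le> 1/2" "r^2 = s"
    using assms real_sqrt_le_mono[of s "1/4"] by (auto simp: r_def real_sqrt_divide)
  have "s / pi * exp_moment theta_exponent s - exp_series theta_exponent s
      = (\<Sum>n. gauss_defect ((2 * real n + 1) * r))"
    unfolding gauss_defect_odd exp_moment_def exp_series_def r(3)
    using suminf_mult[OF theta.summable_moment[OF assms(1)], of "s / pi"]
      suminf_diff[OF summable_mult[OF theta.summable_moment[OF assms(1)], of "s / pi"]
                     theta.summable_series[OF assms(1)]]
    by simp
  also have "\<dots> \<le> 0"
    using suminf_gauss_defect_odd_nonpos[OF r(1,2)] .
  finally show ?thesis
    by (simp add: field_simps)
qed

lemma h_fun_eq_shifted:
  assumes "0 < s"
  shows "h_fun s = - pi * s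
    - s * exp_moment (\<lambda>n. theta_exponent n - pi) s / exp_series (\<lambda>n. theta_exponent n - pi) s"
proof -
  have "exp_moment theta_exponent s / exp_series theta_exponent s
      = pi + exp_moment (\<lambda>n. theta_exponent n - pi) s / exp_series (\<lambda>n. theta_exponent n - pi) s"
    using theta.exp_moment_ratio_shift[OF assms, of pi] by simp
  then show ?thesis
    unfolding h_fun_eq[OF assms] times_divide_eq_right[symmetric] by (simp add: algebra_simps)
qed

theorem mainTheorem15:
  shows "(\<forall>s t. 1/4 \<le> s \<longrightarrow> s < t \<longrightarrow> h_fun t < h_fun s)
       \<and> (\<forall>s. 0 < s \<longrightarrow> s \<le> 1/4 \<longrightarrow> h_fun s \<ge> deriv theta_o 1 / theta_o 1)"
proof (intro conjI allI impI)
  fix s t :: real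
  assume st: "1/4 \<le> s" "s < t"
  have "h_fun t - h_fun s \<le> pi * (s - t) + exp_moment (\<lambda>n. theta_exponent n - pi) (1/8) * (t - s)"
    using theta_shifted.mult_exp_moment_ratio_diff_le[of s t] st
    by (simp add: h_fun_eq_shifted theta_exponent_def algebra_simps)
  also have "\<dots> < 0"
    using mult_strict_right_mono[OF theta_shifted_moment_lt_pi, of "t - s"] st
    by (simp add: algebra_simps)
  finally show "h_fun t < h_fun s"
    by simp
next
  fix s :: real
  assume s: "0 < s" "s \<le> 1/4"
  have "deriv theta_o 1 / theta_o 1 = h_fun 1"
    by (simp add: h_fun_def)
  also have "\<dots> \<le> - pi"
    using theta.exp_moment_ge_exp_series[of 1 pi] theta_exponent_ge_pi theta.exp_series_pos[of 1]
    by (simp add: h_fun_eq field_simps)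
  also have "\<dots> \<le> h_fun s"
    using mult_theta_moment_le[OF s] theta.exp_series_pos[OF s(1)]
    by (simp add: h_fun_eq s(1) field_simps)
  finally show "deriv theta_o 1 / theta_o 1 \<le> h_fun s" .
qed

end
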